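(* Let $\overline{G}$ be the roommate diversity game described in the context. No top-type outcome of $\overline{G}$ is popular.
   Context: In a roommate diversity game with agent set $N=R\cup B$ ($R$ red, $B$ blue) and room size $s$, an outcome is a partition of $N$ into rooms of size $s$; $\pi(a)$ is the room containing $a$ and $\theta(C)=|C\cap R|/|C|$. Each agent $a$ has a trichotomous preference given by a partition of the fractions into sets $D_a^+$ (approved), $D_a^n$ (neutral), $D_a^-$ (disapproved), possibly empty, with approved $\succ$ neutral $\succ$ disapproved and indifference within each set. Agent $a$ prefers $\pi$ to $\pi'$ if it strictly prefers $\theta(\pi(a))$ to $\theta(\pi'(a))$; $N(\pi,\pi')$ is the set of agents preferring $\pi$ to $\pi'$, $\phi(\pi,\pi')=|N(\pi,\pi')|-|N(\pi',\pi)|$, and $\pi$ is popular if $\phi(\pi,\pi')\ge0$ for all outcomes $\pi'$. The game $\overline{G}$: $R=\{r_1,r_2,r_3\}$, $B=\{b_1,\dots,b_6\}$, $s=3$; $r_1$: $D^+=\{1/3\}$, $D^-=\{2/3,1\}$; $r_2,r_3$: $D^+=\{2/3\}$, $D^-=\{1/3,1\}$; $b_1,\dots,b_4$: $D^+=\{1/3\}$, $D^n=\{2/3\}$, $D^-=\{0\}$; $b_5,b_6$: $D^+=\{0\}$, $D^-=\{1/3,2/3\}$ (a red agent is never in a room of fraction $0$, a blue agent never in one of fraction $1$). An outcome is top-type if it equals $\{\{r_1,\hat b_1,\hat b_2\},\{r_2,r_3,\hat b_3\},\{b_5,b_6,\hat b_4\}\}$ for some enumeration $\hat b_1,\dots,\hat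 b_4$ of $\{b_1,b_2,b_3,b_4\}$. *)

theory Defs
  imports Complex_Main "HOL-Library.Disjoint_Sets"
begin

text \<open>Agents form the (finite) universe of type 'a, i.e. N = UNIV. R is the set of red
agents (the others are blue); s is the room size.\<close>

definition outcome :: "nat \<Rightarrow> 'a set set \<Rightarrow> bool" where
  "outcome s P \<longleftrightarrow> partition_on (UNIV :: 'a set) P \<and> (\<forall>C\<in>P. card C = s)"

definition room :: "'a set set \<Rightarrow> 'a \<Rightarrow> 'a set" where
  "room P a = (THE C. C \<in> P \<and> a \<in> C)"

definition theta :: "'a set \<Rightarrow> 'a set \<Rightarrow> real" where
  "theta R C = real (card (C \<inter> R)) / real (card C)"

text \<open>A trichotomous preference is a triple (D+, Dn, D-) of sets of fractions.
Rank 2 = approved, 1 = neutral, 0 = disapproved.\<close>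

type_synonym tripref = "real set \<times> real set \<times> real set"

definition rank :: "tripref \<Rightarrow> real \<Rightarrow> nat" where
  "rank D x = (if x \<in> fst D then 2 else if x \<in> fst (snd D) then 1 else 0)"

definition prefers :: "'a set \<Rightarrow> ('a \<Rightarrow> tripref) \<Rightarrow> 'a \<Rightarrow> 'a set set \<Rightarrow> 'a set set \<Rightarrow> bool" where
  "prefers R pref a P P' \<longleftrightarrow>
     rank (pref a) (theta R (room P' a)) < rank (pref a) (theta R (room P a))"

definition phi :: "'a set \<Rightarrow> ('a \<Rightarrow> tripref) \<Rightarrow> 'a set set \<Rightarrow> 'a set set \<Rightarrow> int" where
  "phi R pref P P' = int (card {a. prefers R pref a P P'}) - int (card {a. prefers R pref a P' P})"

definition popular :: "nat \<Rightarrow> 'a set \<Rightarrow> ('a \<Rightarrow> tripref) \<Rightarrow> 'a set set \<Rightarrow> bool" where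
  "popular s R pref P \<longleftrightarrow> outcome s P \<and> (\<forall>P'. outcome s P' \<longrightarrow> phi R pref P P' \<ge> 0)"

datatype agent = r1 | r2 | r3 | b1 | b2 | b3 | b4 | b5 | b6

lemma UNIV_agent: "(UNIV :: agent set) = {r1, r2, r3, b1, b2, b3, b4, b5, b6}"
  by (auto intro: agent.exhaust)

instance agent :: finite
  by standard (simp add: UNIV_agent)

definition Red :: "agent set" where
  "Red = {r1, r2, r3}"

definition Gpref :: "agent \<Rightarrow> tripref" where
  "Gpref a = (case a of
      r1 \<Rightarrow> ({1/3}, {}, {2/3, 1})
    | r2 \<Rightarrow> ({2/3}, {}, {1/3, 1})
    | r3 \<Rightarrow> ({2/3}, {}, {1/3, 1})
    | b1 \<Rightarrow> ({1/3}, {2/3}, {0})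
    | b2 \<Rightarrow> ({1/3}, {2/3}, {0})
    | b3 \<Rightarrow> ({1/3}, {2/3}, {0})
    | b4 \<Rightarrow> ({1/3}, {2/3}, {0})
    | b5 \<Rightarrow> ({0}, {}, {1/3, 2/3})
    | b6 \<Rightarrow> ({0}, {}, {1/3, 2/3}))"

definition top_type :: "agent set set \<Rightarrow> bool" where
  "top_type P \<longleftrightarrow> (\<exists>h1 h2 h3 h4. distinct [h1, h2, h3, h4] \<and> {h1, h2, h3, h4} = {b1, b2, b3, b4}
      \<and> P = {{r1, h1, h2}, {r2, r3, h3}, {b5, b6, h4}})"

end

theory Submission imports Defs begin

text \<open>In the top-type outcome with rooms \<open>{r\<^sub>1, h\<^sub>1, h\<^sub>2}\<close>, \<open>{r\<^sub>2, r\<^sub>3, h\<^sub>3}\<close>,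
\<open>{b\<^sub>5, b\<^sub>6, h\<^sub>4}\<close> every agent is in an approved room except \<open>h\<^sub>3\<close> (neutral) and
\<open>h\<^sub>4\<close> (disapproved). Moving \<open>h\<^sub>2\<close> to \<open>b\<^sub>5, b\<^sub>6\<close>, \<open>h\<^sub>3\<close> to \<open>r\<^sub>1, h\<^sub>1\<close> and
\<open>h\<^sub>4\<close> to \<open>r\<^sub>2, r\<^sub>3\<close> gives the top-type outcome of the enumeration \<open>h\<^sub>1, h\<^sub>3, h\<^sub>4, h\<^sub>2\<close>, in
which only \<open>h\<^sub>2\<close> and \<open>h\<^sub>4\<close> are below approval. So \<open>h\<^sub>3\<close> and \<open>h\<^sub>4\<close> prefer the
rotated outcome and only \<open>h\<^sub>2\<close> prefers the original one: the rotation wins by 2 to 1.\<close>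

lemma room_eq:
  assumes "partition_on A P" "C \<in> P" "a \<in> C"
  shows "room P a = C"
  unfolding room_def
proof (rule the_equality)
  show "C \<in> P \<and> a \<in> C" using assms(2,3) ..
  fix D assume "D \<in> P \<and> a \<in> D"
  then show "D = C"
    using assms disjointD[OF partition_onD2[OF assms(1)], of D C] by blast
qed

lemma outcome_three_rooms:
  assumes "(UNIV :: 'a set) = {a\<^sub>1, a\<^sub>2, a\<^sub>3, a\<^sub>4, a\<^sub>5, a\<^sub>6, a\<^sub>7, a\<^sub>8, a\<^sub>9}"
    and "distinct [a\<^sub>1, a\<^sub>2, a\<^sub>3, a\<^sub>4, a\<^sub>5, a\<^sub>6, a\<^sub>7, a\<^sub>8, a\<^sub>9]"
  shows "outcome 3 {{a\<^sub>1, a\<^sub>2, a\<^sub>3}, {a\<^sub>4, a\<^sub>5, a\<^sub>6}, {a\<^sub>7, a\<^sub>8, a\<^sub>9}}"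
  using assms unfolding outcome_def partition_on_def disjoint_def by auto

definition satisfaction :: "'a set \<Rightarrow> ('a \<Rightarrow> tripref) \<Rightarrow> 'a set set \<Rightarrow> 'a \<Rightarrow> nat" where
  "satisfaction R pref P a = rank (pref a) (theta R (room P a))"

lemma prefers_iff_satisfaction:
  "prefers R pref a P P' \<longleftrightarrow> satisfaction R pref P' a < satisfaction R pref P a"
  unfolding prefers_def satisfaction_def ..

lemma satisfaction_eq:
  assumes "partition_on A P" "C \<in> P" "a \<in> C"
  shows "satisfaction R pref P a = rank (pref a) (theta R C)"
  unfolding satisfaction_def room_eq[OF assms] ..

lemma rank_Gpref_approved:
  "rank (Gpref r1) (1/3) = 2" "rank (Gpref r2) (2/3) = 2" "rank (Gpref r3) (2/3) = 2"
  "rank (Gpref b5) 0 = 2" "rank (Gpref b6) 0 = 2"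
  by (simp_all add: Gpref_def rank_def)

lemma rank_Gpref_blue:
  assumes "h \<in> {b1, b2, b3, b4}"
  shows "rank (Gpref h) (1/3) = 2" "rank (Gpref h) (2/3) = 1" "rank (Gpref h) 0 = 0"
  using assms by (auto simp: Gpref_def rank_def)

lemma theta_r1_room:
  assumes "x \<in> {b1, b2, b3, b4}" "y \<in> {b1, b2, b3, b4}" "x \<noteq> y"
  shows "theta Red {r1, x, y} = 1/3"
  using assms by (auto simp: theta_def Red_def)

lemma theta_r2_r3_room: "x \<in> {b1, b2, b3, b4} \<Longrightarrow> theta Red {r2, r3, x} = 2/3"
  by (auto simp: theta_def Red_def)

lemma theta_b5_b6_room: "x \<in> {b1, b2, b3, b4} \<Longrightarrow> theta Red {b5, b6, x} = 0"
  by (auto simp: theta_def Red_def)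

locale blue_enumeration =
  fixes h\<^sub>1 h\<^sub>2 h\<^sub>3 h\<^sub>4 :: agent
  assumes distinct: "distinct [h\<^sub>1, h\<^sub>2, h\<^sub>3, h\<^sub>4]"
    and blue: "{h\<^sub>1, h\<^sub>2, h\<^sub>3, h\<^sub>4} = {b1, b2, b3, b4}"
begin

definition top_outcome :: "agent set set" where
  "top_outcome = {{r1, h\<^sub>1, h\<^sub>2}, {r2, r3, h\<^sub>3}, {b5, b6, h\<^sub>4}}"

lemma blue_members: "h\<^sub>1 \<in> {b1, b2, b3, b4}" "h\<^sub>2 \<in> {b1, b2, b3, b4}"
    "h\<^sub>3 \<in> {b1, b2, b3, b4}" "h\<^sub>4 \<in> {b1, b2, b3, b4}"
  using blue by blast+

lemmas rank_Gpref_members = rank_Gpref_approved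
  rank_Gpref_blue[OF blue_members(1)] rank_Gpref_blue[OF blue_members(2)]
  rank_Gpref_blue[OF blue_members(3)] rank_Gpref_blue[OF blue_members(4)]

lemma UNIV_eq: "(UNIV :: agent set) = {r1, h\<^sub>1, h\<^sub>2, r2, r3, h\<^sub>3, b5, b6, h\<^sub>4}"
  using blue UNIV_agent by auto

lemma distinct_agents: "distinct [r1, h\<^sub>1, h\<^sub>2, r2, r3, h\<^sub>3, b5, b6, h\<^sub>4]"
  using distinct blue_members by auto

lemma outcome_top_outcome: "outcome 3 top_outcome"
  unfolding top_outcome_def using outcome_three_rooms[OF UNIV_eq distinct_agents] .

lemma satisfaction_top_outcome:
  "satisfaction Red Gpref top_outcome a = (if a = h\<^sub>3 then 1 else if a = h\<^sub>4 then 0 else 2)"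
proof -
  have part: "partition_on UNIV top_outcome"
    using outcome_top_outcome unfolding outcome_def ..
  have sat: "satisfaction Red Gpref top_outcome a = rank (Gpref a) (theta Red C)"
    if "C \<in> top_outcome" "a \<in> C" for C
    using satisfaction_eq[OF part that] .
  consider "a \<in> {r1, h\<^sub>1, h\<^sub>2}" | "a \<in> {r2, r3, h\<^sub>3}" | "a \<in> {b5, b6, h\<^sub>4}"
    using UNIV_eq by blast
  then show ?thesis
  proof cases
    case 1
    have "satisfaction Red Gpref top_outcome a = rank (Gpref a) (theta Red {r1, h\<^sub>1, h\<^sub>2})"
      by (rule sat) (use 1 in \<open>simp_all add: top_outcome_def\<close>)
    also have "theta Red {r1, h\<^sub>1, h\<^sub>2} = 1/3"
      using theta_r1_room blue_members distinct by simp
    finally show ?thesis using 1 distinct_agents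
      by (auto simp: rank_Gpref_members)
  next
    case 2
    have "satisfaction Red Gpref top_outcome a = rank (Gpref a) (theta Red {r2, r3, h\<^sub>3})"
      by (rule sat) (use 2 in \<open>simp_all add: top_outcome_def\<close>)
    also have "theta Red {r2, r3, h\<^sub>3} = 2/3"
      using theta_r2_r3_room blue_members by simp
    finally show ?thesis using 2 distinct_agents
      by (auto simp: rank_Gpref_members)
  next
    case 3
    have "satisfaction Red Gpref top_outcome a = rank (Gpref a) (theta Red {b5, b6, h\<^sub>4})"
      by (rule sat) (use 3 in \<open>simp_all add: top_outcome_def\<close>)
    also have "theta Red {b5, b6, h\<^sub>4} = 0"
      using theta_b5_b6_room blue_members by simp
    finally show ?thesis using 3 distinct_agents
      by (auto simp: rank_Gpref_members)
  qed
qed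

lemma blue_enumeration_rotate: "blue_enumeration h\<^sub>1 h\<^sub>3 h\<^sub>4 h\<^sub>2"
  using distinct blue by unfold_locales auto

lemma phi_top_outcome_rotate:
  "phi Red Gpref top_outcome (blue_enumeration.top_outcome h\<^sub>1 h\<^sub>3 h\<^sub>4 h\<^sub>2) = -1"
proof -
  let ?Q = "blue_enumeration.top_outcome h\<^sub>1 h\<^sub>3 h\<^sub>4 h\<^sub>2"
  note sat_Q = blue_enumeration.satisfaction_top_outcome[OF blue_enumeration_rotate]
  have "{a. prefers Red Gpref a top_outcome ?Q} = {h\<^sub>2}"
    unfolding prefers_iff_satisfaction satisfaction_top_outcome sat_Q
    using distinct by auto
  moreover have "{a. prefers Red Gpref a ?Q top_outcome} = {h\<^sub>3, h\<^sub>4}"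
    unfolding prefers_iff_satisfaction satisfaction_top_outcome sat_Q
    using distinct by auto
  ultimately show ?thesis
    using distinct by (simp add: phi_def)
qed

lemma not_popular_top_outcome: "\<not> popular 3 Red Gpref top_outcome"
  using phi_top_outcome_rotate
    blue_enumeration.outcome_top_outcome[OF blue_enumeration_rotate]
  unfolding popular_def by fastforce

end

theorem mainTheorem9:
  shows "\<forall>P. top_type P \<longrightarrow> \<not> popular 3 Red Gpref P"
proof (intro allI impI)
  fix P assume "top_type P"
  then obtain h\<^sub>1 h\<^sub>2 h\<^sub>3 h\<^sub>4
    where "distinct [h\<^sub>1, h\<^sub>2, h\<^sub>3, h\<^sub>4]" "{h\<^sub>1, h\<^sub>2, h\<^sub>3, h\<^sub>4} = {b1, b2, b3, b4}"
    and P: "P = {{r1, h\<^sub>1, h\<^sub>2}, {r2, r3, h\<^sub>3}, {b5, b6, h\<^sub>4}}"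
    unfolding top_type_def by blast
  then interpret blue_enumeration h\<^sub>1 h\<^sub>2 h\<^sub>3 h\<^sub>4
    by unfold_locales
  show "\<not> popular 3 Red Gpref P"
    using not_popular_top_outcome unfolding P top_outcome_def .
qed

end
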